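(* Let $A_1,A_2,A_3\in\mathbb{R}^n_s$ be three distinct points lying on a gyrocircle in the Einstein gyrovector space $\mathbb{R}^n_s$, such that the gyrosecant gyroline through $A_2,A_3$ and the gyrotangent gyroline of the gyrocircle with tangency point $A_1$ share a point $P$ not on the gyrocircle. Let $d_k=\|\ominus A_k\oplus P\|$ for $k=1,2,3$ and $d_{23}=\|\ominus A_2\oplus A_3\|$ (when $A_2$ lies between $P$ and $A_3$, one has $d_{23}=d_3\ominus d_2$, where for reals $a\ominus b=(a-b)/(1-ab/s^2)$). Then $$\gamma_{d_1}^2d_1^2=\frac{2}{\gamma_{d_{23}}+1}\,\gamma_{d_2}d_2\,\gamma_{d_3}d_3 .$$
   Context: Fix $s>0$, $n\ge2$; $\mathbb{R}^n_s=\{v\in\mathbb{R}^n:\|v\|<s\}$ with Einstein addition $u\oplus v=\frac{1}{1+u\cdot v/s^2}\{u+\frac{1}{\gamma_u}v+\frac{1}{s^2}\frac{\gamma_u}{1+\gamma_u}(u\cdot v)u\}$, $\gamma_v=(1-\|v\|^2/s^2)^{-1/2}$ and for real $0\le a<s$, $\gamma_a=(1-a^2/s^2)^{-1/2}$; $\ominus v=-v$. Gyrodistance between $A,B$: $\|\ominus A\oplus B\|$. Gyrolines are intersections of Euclidean lines with the ball. A gyroplane is $(A_1\oplus\mathrm{span}\{\ominus A_1\oplus A_2,\ominus A_1\oplus A_3\})\cap\mathbb{R}^n_s$ for $\ominus A_1\oplus A_2,\ominus A_1\oplus A_3$ linearly independent; a gyrocircle with gyrocenter $O$ and gyroradius $r>0$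 is the set of points of a gyroplane containing $O$ at gyrodistance $r$ from $O$. A gyrosecant gyroline meets the gyrocircle in two different points; a gyrotangent gyroline is a gyroline in the gyroplane of the gyrocircle meeting it in exactly one point (the tangency point). *)

theory Defs
  imports "HOL-Analysis.Analysis"
begin

definition ball_s :: "real \<Rightarrow> (real^'n) set" where
  "ball_s s = {v. norm v < s}"

definition gam :: "real \<Rightarrow> real^'n \<Rightarrow> real" where
  "gam s v = 1 / sqrt (1 - (norm v)^2 / s^2)"

definition gamr :: "real \<Rightarrow> real \<Rightarrow> real" where
  "gamr s a = 1 / sqrt (1 - a^2 / s^2)"

definition ein_add :: "real \<Rightarrow> real^'n \<Rightarrow> real^'n \<Rightarrow> real^'n" where
  "ein_add s u v = (1 / (1 + (u \<bullet> v) / s^2)) *\<^sub>R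
     (u + (1 / gam s u) *\<^sub>R v + ((1 / s^2) * (gam s u / (1 + gam s u)) * (u \<bullet> v)) *\<^sub>R u)"

definition gyrodist :: "real \<Rightarrow> real^'n \<Rightarrow> real^'n \<Rightarrow> real" where
  "gyrodist s A B = norm (ein_add s (- A) B)"

definition is_gyroline :: "real \<Rightarrow> (real^'n) set \<Rightarrow> bool" where
  "is_gyroline s L \<longleftrightarrow> (\<exists>a d. d \<noteq> 0 \<and> L = {a + t *\<^sub>R d | t. True} \<inter> ball_s s \<and> L \<noteq> {})"

definition gyroline_through :: "real \<Rightarrow> real^'n \<Rightarrow> real^'n \<Rightarrow> (real^'n) set" where
  "gyroline_through s A B = {A + t *\<^sub>R (B - A) | t. True} \<inter> ball_s s"

definition gyroplane :: "real \<Rightarrow> real^'n \<Rightarrow> real^'n \<Rightarrow> real^'n \<Rightarrow> (real^'n) set" where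
  "gyroplane s A1 A2 A3 =
     {ein_add s A1 x | x. x \<in> span {ein_add s (- A1) A2, ein_add s (- A1) A3}} \<inter> ball_s s"

definition is_gyroplane :: "real \<Rightarrow> (real^'n) set \<Rightarrow> bool" where
  "is_gyroplane s Pl \<longleftrightarrow> (\<exists>A1 A2 A3. A1 \<in> ball_s s \<and> A2 \<in> ball_s s \<and> A3 \<in> ball_s s \<and>
      ein_add s (- A1) A2 \<noteq> ein_add s (- A1) A3 \<and>
      independent {ein_add s (- A1) A2, ein_add s (- A1) A3} \<and> Pl = gyroplane s A1 A2 A3)"

definition gyrocircle :: "real \<Rightarrow> (real^'n) set \<Rightarrow> real^'n \<Rightarrow> real \<Rightarrow> (real^'n) set" where
  "gyrocircle s Pl Oc r = {X \<in> Pl. gyrodist s Oc X = r}"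

end

theory Submission
  imports Defs
begin

text \<open>The Einstein ball is the Beltrami--Klein model: lifting \<open>X \<mapsto> \<gamma>\<^sub>X (1, X)\<close> onto the
  hyperboloid, the gamma factor of a gyrodistance becomes the Minkowski product \<open>\<langle>X, Y\<rangle>\<close> of the
  lifts, a gyrocircle with gyrocenter \<open>O\<close> becomes a level set \<open>\<langle>O, \<cdot>\<rangle> = \<rho>\<close>, and a point \<open>P\<close>
  of the gyroline \<open>A\<^sub>2A\<^sub>3\<close> lifts to \<open>\<alpha> A\<^sub>2 + \<beta> A\<^sub>3\<close> with \<open>\<alpha>\<^sup>2 + \<beta>\<^sup>2 + 2\<alpha>\<beta>\<langle>A\<^sub>2, A\<^sub>3\<rangle> = 1\<close>.
  Tangency at \<open>A\<^sub>1\<close> means that the quadratic equation for the intersections of the gyroline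
  \<open>A\<^sub>1P\<close> with the circle has a double root, which forces \<open>\<langle>O, P\<rangle> = \<rho> \<langle>A\<^sub>1, P\<rangle>\<close>, i.e.
  \<open>\<langle>A\<^sub>1, P\<rangle> = \<alpha> + \<beta>\<close>. The theorem is then an identity in \<open>\<alpha>\<close>, \<open>\<beta>\<close> and
  \<open>\<langle>A\<^sub>2, A\<^sub>3\<rangle> = \<gamma>\<^sub>d\<^sub>2\<^sub>3\<close>.\<close>

definition lorentz_lift :: "real \<Rightarrow> real^'n \<Rightarrow> real \<times> (real^'n)" where
  "lorentz_lift s X = (gam s X, gam s X *\<^sub>R X)"

definition minkowski :: "real \<Rightarrow> real \<times> (real^'n) \<Rightarrow> real \<times> (real^'n) \<Rightarrow> real" where
  "minkowski s x y = fst x * fst y - (snd x \<bullet> snd y) / s^2"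

abbreviation lift_product :: "real \<Rightarrow> real^'n \<Rightarrow> real^'n \<Rightarrow> real" where
  "lift_product s X Y \<equiv> minkowski s (lorentz_lift s X) (lorentz_lift s Y)"

lemma minkowski_add_left: "minkowski s (x + y) z = minkowski s x z + minkowski s y z"
  by (simp add: minkowski_def inner_add_left algebra_simps add_divide_distrib)

lemma minkowski_add_right: "minkowski s z (x + y) = minkowski s z x + minkowski s z y"
  by (simp add: minkowski_def inner_add_right algebra_simps add_divide_distrib)

lemma minkowski_scaleR_left: "minkowski s (c *\<^sub>R x) z = c * minkowski s x z"
  by (simp add: minkowski_def algebra_simps)

lemma minkowski_scaleR_right: "minkowski s z (c *\<^sub>R x) = c * minkowski s z x"
  by (simp add: minkowski_def algebra_simps)

lemma minkowski_commute: "minkowski s x y = minkowski s y x"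
  by (simp add: minkowski_def inner_commute mult.commute)

lemma gam_uminus: "gam s (- X) = gam s X"
  by (simp add: gam_def)

lemma
  assumes "s > 0" "norm X < s"
  shows gam_pos: "gam s X > 0"
    and gam_sq_mult: "(gam s X)^2 * (1 - (norm X)^2 / s^2) = 1"
proof -
  have ns: "(norm X)^2 < s^2"
    using assms by (simp add: power_strict_mono)
  then have pos: "1 - (norm X)^2 / s^2 > 0"
    using assms by (simp add: field_simps)
  then show "gam s X > 0"
    by (simp add: gam_def)
  have "(sqrt (1 - (norm X)^2 / s^2))^2 = 1 - (norm X)^2 / s^2"
    using pos by simp
  then show "(gam s X)^2 * (1 - (norm X)^2 / s^2) = 1"
    using pos ns by (simp add: gam_def power_divide)
qed

lemma lift_product_eq: "lift_product s X Y = gam s X * gam s Y * (1 - (X \<bullet> Y) / s^2)"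
  by (simp add: minkowski_def lorentz_lift_def algebra_simps)

lemma lift_product_self:
  assumes "s > 0" "norm X < s"
  shows "lift_product s X X = 1"
  using gam_sq_mult[OF assms]
  by (simp add: lift_product_eq power2_norm_eq_inner[symmetric] power2_eq_square)

lemma one_plus_inner_pos:
  assumes "s > 0" "norm u < s" "norm v < s"
  shows "1 + (u \<bullet> v) / s^2 > 0"
proof -
  have "\<bar>u \<bullet> v\<bar> \<le> norm u * norm v"
    by (rule Cauchy_Schwarz_ineq2)
  also have "\<dots> < s * s"
    using assms by (simp add: mult_strict_mono')
  finally show ?thesis
    using assms(1) by (simp add: field_simps abs_less_iff power2_eq_square)
qed

lemma norm_sq_ein_add:
  assumes s: "s > 0" and u: "norm u < s"
  shows "(norm (ein_add s u v))^2 =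
    (u \<bullet> u + (v \<bullet> v) / (gam s u)^2 + 2 * (u \<bullet> v) + (u \<bullet> v)^2 / s^2)
    / (1 + (u \<bullet> v) / s^2)^2"
proof -
  define g where "g = gam s u"
  define k where "k = (1 / s^2) * (g / (1 + g))"
  define p where "p = u \<bullet> v"
  define x where "x = u \<bullet> u"
  define w where "w = u + (1 / g) *\<^sub>R v + (k * p) *\<^sub>R u"
  have g0: "g > 0"
    using gam_pos[OF s u] by (simp add: g_def)
  have gx: "g^2 * x = s^2 * (g^2 - 1)"
    using gam_sq_mult[OF s u] g0 s by (simp add: g_def x_def power2_norm_eq_inner field_simps)
  have "k * x = (g^2 * x) / (g * s^2 * (1 + g))"
    unfolding k_def using g0 s by (simp add: divide_simps) (simp add: algebra_simps power2_eq_square)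
  also have "\<dots> = ((g - 1) * (s^2 * (1 + g))) / (g * (s^2 * (1 + g)))"
    unfolding gx by (simp add: algebra_simps power2_eq_square)
  also have "\<dots> = (g - 1) / g"
    using g0 s by (intro mult_divide_mult_cancel_right) simp
  finally have kx: "k * x = (g - 1) / g" .
  have kg: "2 * k / g + k * ((g - 1) / g) = 1 / s^2"
  proof -
    have "2 * k / g + k * ((g - 1) / g) = (k * (1 + g)) / g"
      using g0 by (simp add: field_simps)
    also have "k * (1 + g) = g / s^2"
      using g0 by (simp add: k_def)
    finally show ?thesis
      using g0 by simp
  qed
  have "w \<bullet> w = x + (v \<bullet> v) / g^2 + 2 * p / g + 2 * p * (k * x) + p^2 * (2 * k / g + k * (k * x))"
    by (simp add: w_def inner_add_left inner_add_right inner_commute x_def p_def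
        algebra_simps power2_eq_square)
  also have "\<dots> = x + (v \<bullet> v) / g^2 + 2 * p + p^2 / s^2"
  proof -
    have "2 * p * ((g - 1) / g) + 2 * p / g = 2 * p"
      using g0 by (simp add: field_simps)
    then show ?thesis
      unfolding kx kg by simp
  qed
  finally have "w \<bullet> w = x + (v \<bullet> v) / g^2 + 2 * p + p^2 / s^2" .
  moreover have "ein_add s u v = (1 / (1 + p / s^2)) *\<^sub>R w"
    by (simp add: ein_add_def w_def k_def p_def g_def)
  ultimately show ?thesis
    by (simp add: power2_norm_eq_inner[symmetric] power_divide g_def p_def x_def)
qed

lemma
  assumes s: "s > 0" and X: "norm X < s" and Y: "norm Y < s"
  shows lift_product_pos: "lift_product s X Y > 0"
    and one_minus_gyrodist_sq: "1 - (gyrodist s X Y)^2 / s^2 = 1 / (lift_product s X Y)^2"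
proof -
  define g where "g = gam s X"
  define h where "h = gam s Y"
  define D where "D = 1 - (X \<bullet> Y) / s^2"
  have g0: "g > 0" and h0: "h > 0"
    using gam_pos[OF s X] gam_pos[OF s Y] by (simp_all add: g_def h_def)
  have D0: "D > 0"
    using one_plus_inner_pos[of s "- X" Y] s X Y by (simp add: D_def)
  have M: "lift_product s X Y = g * h * D"
    by (simp add: lift_product_eq g_def h_def D_def)
  then show "lift_product s X Y > 0"
    using g0 h0 D0 by simp
  have sx: "s^2 - X \<bullet> X = s^2 / g^2" and sy: "s^2 - Y \<bullet> Y = s^2 / h^2"
    using gam_sq_mult[OF s X] gam_sq_mult[OF s Y] g0 h0 s
    by (simp_all add: g_def h_def power2_norm_eq_inner field_simps)
  have d: "(gyrodist s X Y)^2 = (X \<bullet> X + (Y \<bullet> Y) / g^2 - 2 * (X \<bullet> Y) + (X \<bullet> Y)^2 / s^2) / D^2"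
    using norm_sq_ein_add[of s "- X" Y] s X
    by (simp add: gyrodist_def gam_uminus g_def D_def)
  have "s^2 * D^2 - (X \<bullet> X + (Y \<bullet> Y) / g^2 - 2 * (X \<bullet> Y) + (X \<bullet> Y)^2 / s^2)
      = (s^2 - X \<bullet> X) - (Y \<bullet> Y) / g^2"
    using s by (simp add: D_def field_simps power2_eq_square)
  also have "\<dots> = s^2 / (g^2 * h^2)"
    unfolding sx using g0 h0 sy s by (simp add: field_simps)
  finally show "1 - (gyrodist s X Y)^2 / s^2 = 1 / (lift_product s X Y)^2"
    unfolding d M using s g0 h0 D0 by (simp add: field_simps power2_eq_square)
qed

lemma
  assumes s: "s > 0" and X: "norm X < s" and Y: "norm Y < s"
  shows gamr_gyrodist: "gamr s (gyrodist s X Y) = lift_product s X Y"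
    and lift_product_ge_one: "lift_product s X Y \<ge> 1"
    and gamr_gyrodist_mult_gyrodist:
      "gamr s (gyrodist s X Y) * gyrodist s X Y = s * sqrt ((lift_product s X Y)^2 - 1)"
proof -
  define M where "M = lift_product s X Y"
  define d where "d = gyrodist s X Y"
  have M0: "M > 0"
    using lift_product_pos[OF assms] by (simp add: M_def)
  have e: "1 - d^2 / s^2 = 1 / M^2"
    using one_minus_gyrodist_sq[OF assms] by (simp add: M_def d_def)
  show g: "gamr s d = M"
    unfolding gamr_def e using M0 by (simp add: real_sqrt_divide)
  have "1 / M^2 \<le> 1"
    using e by (smt (verit) divide_nonneg_nonneg zero_le_power2)
  then have "1 \<le> M^2"
    using M0 by (simp add: field_simps)
  then show "M \<ge> 1"
    using power2_le_imp_le[of 1 M] M0 by simp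
  have d0: "d \<ge> 0"
    by (simp add: d_def gyrodist_def)
  have Md: "(M * d)^2 = s^2 * (M^2 - 1)"
    using e s M0 by (simp add: power_mult_distrib field_simps)
  have "M * d = sqrt ((M * d)^2)"
    using M0 d0 by simp
  also have "\<dots> = s * sqrt (M^2 - 1)"
    unfolding Md using s by (simp add: real_sqrt_mult)
  finally show "gamr s d * d = s * sqrt (M^2 - 1)"
    using g by simp
qed

lemma gyrodist_eq_iff_lift_product_eq:
  assumes "s > 0" "norm X < s" "norm Y < s" "norm Z < s" "norm W < s"
  shows "gyrodist s X Y = gyrodist s Z W \<longleftrightarrow> lift_product s X Y = lift_product s Z W"
proof
  assume "lift_product s X Y = lift_product s Z W"
  then have "(gyrodist s X Y)^2 = (gyrodist s Z W)^2"
    using one_minus_gyrodist_sq[of s X Y] one_minus_gyrodist_sq[of s Z W] assms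
    by (simp add: field_simps)
  then show "gyrodist s X Y = gyrodist s Z W"
    by (simp add: gyrodist_def)
qed (use gamr_gyrodist assms in metis)

lemma lorentz_lift_on_line:
  assumes "s > 0" "norm A < s" "norm B < s" and P: "P = A + t *\<^sub>R (B - A)"
  shows "lorentz_lift s P = (gam s P * (1 - t) / gam s A) *\<^sub>R lorentz_lift s A
                          + (gam s P * t / gam s B) *\<^sub>R lorentz_lift s B"
proof -
  define g where "g = gam s P"
  have "gam s A > 0" "gam s B > 0"
    using gam_pos assms by auto
  then have A: "(g * (1 - t) / gam s A) *\<^sub>R lorentz_lift s A = (g * (1 - t), (g * (1 - t)) *\<^sub>R A)"
    and B: "(g * t / gam s B) *\<^sub>R lorentz_lift s B = (g * t, (g * t) *\<^sub>R B)"
    by (simp_all add: lorentz_lift_def)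
  have "g *\<^sub>R P = (g * (1 - t)) *\<^sub>R A + (g * t) *\<^sub>R B"
    unfolding P by (simp add: algebra_simps)
  then have "lorentz_lift s P = (g, (g * (1 - t)) *\<^sub>R A + (g * t) *\<^sub>R B)"
    unfolding lorentz_lift_def g_def[symmetric] by simp
  then show ?thesis
    unfolding g_def[symmetric] A B by (simp add: algebra_simps)
qed

lemma lift_products_of_combination:
  assumes s: "s > 0" and A: "norm A < s" and B: "norm B < s" and P: "norm P < s"
    and lift: "lorentz_lift s P = \<alpha> *\<^sub>R lorentz_lift s A + \<beta> *\<^sub>R lorentz_lift s B"
  shows "lift_product s X P = \<alpha> * lift_product s X A + \<beta> * lift_product s X B"
    and "lift_product s A P = \<alpha> + \<beta> * lift_product s A B"
    and "lift_product s B P = \<alpha> * lift_product s A B + \<beta>"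
    and "\<alpha>^2 + \<beta>^2 + 2 * \<alpha> * \<beta> * lift_product s A B = 1"
proof -
  show comb: "lift_product s X P = \<alpha> * lift_product s X A + \<beta> * lift_product s X B" for X
    unfolding lift by (simp add: minkowski_add_right minkowski_scaleR_right)
  show AP: "lift_product s A P = \<alpha> + \<beta> * lift_product s A B"
    using comb[of A] lift_product_self[OF s A] by simp
  show BP: "lift_product s B P = \<alpha> * lift_product s A B + \<beta>"
    using comb[of B] lift_product_self[OF s B]
      minkowski_commute[of s "lorentz_lift s B" "lorentz_lift s A"] by simp
  have "1 = lift_product s P P"
    using lift_product_self[OF s P] by simp
  also have "\<dots> = \<alpha> * lift_product s A P + \<beta> * lift_product s B P"
    using comb[of P] minkowski_commute[of s "lorentz_lift s P" "lorentz_lift s A"]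
      minkowski_commute[of s "lorentz_lift s P" "lorentz_lift s B"] by simp
  finally show "\<alpha>^2 + \<beta>^2 + 2 * \<alpha> * \<beta> * lift_product s A B = 1"
    unfolding AP BP by (simp add: algebra_simps power2_eq_square)
qed

lemma snd_combination_of_lifts:
  "snd (u *\<^sub>R lorentz_lift s A + v *\<^sub>R lorentz_lift s P)
     = fst (u *\<^sub>R lorentz_lift s A + v *\<^sub>R lorentz_lift s P) *\<^sub>R A + (v * gam s P) *\<^sub>R (P - A)"
  by (simp add: lorentz_lift_def algebra_simps)

lemma snd_eq_0_if_causal_fst_eq_0:
  assumes "s > 0" "minkowski s w w \<ge> 0" "fst w = 0"
  shows "snd w = 0"
proof -
  have "snd w \<bullet> snd w \<le> 0"
    using assms by (simp add: minkowski_def divide_le_0_iff)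
  then show ?thesis
    by (metis inner_ge_zero inner_eq_zero_iff order_antisym)
qed

lemma lift_product_of_ray:
  assumes s: "s > 0" and Oc: "norm Oc < s" and \<rho>: "\<rho> > 0"
    and w0: "fst w \<noteq> 0" and Q: "snd w = fst w *\<^sub>R Q"
    and eq: "(minkowski s (lorentz_lift s Oc) w)^2 = \<rho>^2 * minkowski s w w"
  shows "norm Q < s" and "lift_product s Oc Q = \<rho>"
proof -
  have mww: "minkowski s w w = (fst w)^2 * (1 - (Q \<bullet> Q) / s^2)"
    by (simp add: minkowski_def Q algebra_simps power2_eq_square)
  have mOw: "minkowski s (lorentz_lift s Oc) w = gam s Oc * fst w * (1 - (Oc \<bullet> Q) / s^2)"
    by (simp add: minkowski_def lorentz_lift_def Q algebra_simps)
  show nQ: "norm Q < s"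
  proof (rule ccontr)
    assume "\<not> norm Q < s"
    then have nq: "s \<le> norm Q" by simp
    then have "s^2 \<le> Q \<bullet> Q"
      using power_mono[OF nq, of 2] s by (simp add: power2_norm_eq_inner)
    then have "1 - (Q \<bullet> Q) / s^2 \<le> 0"
      using s by (simp add: field_simps)
    then have "minkowski s w w \<le> 0"
      unfolding mww by (simp add: mult_nonneg_nonpos)
    moreover have "\<rho>^2 * minkowski s w w \<ge> 0"
      using eq[symmetric] by simp
    then have "minkowski s w w \<ge> 0"
      using \<rho> by (simp add: zero_le_mult_iff)
    ultimately have m0: "minkowski s w w = 0" by simp
    then have "Q \<bullet> Q = s^2"
      using mww w0 s by simp
    then have "norm Q = s"
      using s by (simp add: norm_eq_sqrt_inner)
    have "minkowski s (lorentz_lift s Oc) w = 0"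
      using eq m0 by simp
    then have "Oc \<bullet> Q = s^2"
      using mOw w0 s gam_pos[OF s Oc] by simp
    have "\<bar>Oc \<bullet> Q\<bar> \<le> norm Oc * norm Q"
      by (rule Cauchy_Schwarz_ineq2)
    also have "\<dots> < s * norm Q"
      using Oc nq s by (intro mult_strict_right_mono) auto
    finally show False
      using \<open>Oc \<bullet> Q = s^2\<close> \<open>norm Q = s\<close> by (simp add: power2_eq_square)
  qed
  have lift: "lorentz_lift s Q = (gam s Q / fst w) *\<^sub>R w"
    using w0 Q by (simp add: lorentz_lift_def prod_eq_iff)
  have "(lift_product s Oc Q)^2 = (gam s Q)^2 * (1 - (Q \<bullet> Q) / s^2) * \<rho>^2"
    unfolding lift minkowski_scaleR_right power_mult_distrib eq mww
    using w0 by (simp add: power_divide field_simps)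
  also have "\<dots> = \<rho>^2"
    using gam_sq_mult[OF s nQ] by (simp add: power2_norm_eq_inner)
  finally show "lift_product s Oc Q = \<rho>"
    using lift_product_pos[OF s Oc nQ] \<rho> by (simp add: power2_eq_iff_nonneg)
qed

lemma lift_product_tangent:
  assumes s: "s > 0" and Oc: "norm Oc < s" and A: "norm A < s" and P: "norm P < s" and "A \<noteq> P"
    and tangent: "\<And>\<tau>. norm (A + \<tau> *\<^sub>R (P - A)) < s \<Longrightarrow>
      lift_product s Oc (A + \<tau> *\<^sub>R (P - A)) = lift_product s Oc A \<Longrightarrow> \<tau> = 0"
  shows "lift_product s Oc P = lift_product s Oc A * lift_product s A P"
proof -
  define \<rho> where "\<rho> = lift_product s Oc A"
  define q where "q = lift_product s Oc P"
  define C where "C = lift_product s A P"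
  define K where "K = \<rho> * (q - \<rho> * C)"
  define L where "L = q^2 - \<rho>^2"
  have \<rho>0: "\<rho> > 0"
    using lift_product_pos[OF s Oc A] by (simp add: \<rho>_def)
  have "K = 0"
  proof (rule ccontr)
    assume K: "K \<noteq> 0"
    \<comment> \<open>On the span of the lifts of \<open>A\<close> and \<open>P\<close>, \<open>\<langle>O, x\<rangle>\<^sup>2 = \<rho>\<^sup>2 \<langle>x, x\<rangle>\<close> is a homogeneous
      quadratic with the root \<open>lift A\<close>; its other root \<open>w\<close> is a second point of the line \<open>AP\<close>
      on the circle unless \<open>K = 0\<close>.\<close>
    define w where "w = L *\<^sub>R lorentz_lift s A + (- 2 * K) *\<^sub>R lorentz_lift s P"
    have mOw: "minkowski s (lorentz_lift s Oc) w = L * \<rho> - 2 * K * q"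
      unfolding w_def minkowski_add_right minkowski_scaleR_right by (simp add: \<rho>_def q_def)
    have "minkowski s w w = L * (L * lift_product s A A - 2 * K * lift_product s P A)
        - 2 * K * (L * lift_product s A P - 2 * K * lift_product s P P)"
      unfolding w_def minkowski_add_left minkowski_add_right minkowski_scaleR_left
        minkowski_scaleR_right by (simp add: algebra_simps)
    then have mww: "minkowski s w w = L^2 + 4 * K^2 - 4 * L * K * C"
      using lift_product_self[OF s A] lift_product_self[OF s P]
        minkowski_commute[of s "lorentz_lift s P" "lorentz_lift s A"]
      by (simp add: C_def algebra_simps power2_eq_square)
    have eq: "(minkowski s (lorentz_lift s Oc) w)^2 = \<rho>^2 * minkowski s w w"
      unfolding mOw mww by (simp add: K_def L_def algebra_simps power2_eq_square)
    have "\<rho>^2 * minkowski s w w \<ge> 0"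
      using eq[symmetric] by simp
    then have causal: "minkowski s w w \<ge> 0"
      using \<rho>0 by (simp add: zero_le_mult_iff)
    have snd_w: "snd w = fst w *\<^sub>R A + (- 2 * K * gam s P) *\<^sub>R (P - A)"
      unfolding w_def by (rule snd_combination_of_lifts)
    have w0: "fst w \<noteq> 0"
    proof
      assume "fst w = 0"
      then have "(- 2 * K * gam s P) *\<^sub>R (P - A) = 0"
        using snd_eq_0_if_causal_fst_eq_0[OF s causal] snd_w by simp
      then show False
        using K gam_pos[OF s P] \<open>A \<noteq> P\<close> by simp
    qed
    define \<tau> where "\<tau> = - 2 * K * gam s P / fst w"
    have "snd w = fst w *\<^sub>R (A + \<tau> *\<^sub>R (P - A))"
      unfolding snd_w \<tau>_def using w0 by (simp add: algebra_simps)
    from lift_product_of_ray[OF s Oc \<rho>0 w0 this eq]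
    have "\<tau> = 0"
      by (intro tangent) (simp_all add: \<rho>_def)
    then show False
      using K gam_pos[OF s P] w0 by (simp add: \<tau>_def)
  qed
  then show ?thesis
    using \<rho>0 by (simp add: K_def \<rho>_def q_def C_def)
qed

lemma tangent_secant_identity:
  fixes \<alpha> \<beta> c s :: real
  assumes c: "c \<ge> 1" and sum: "(\<alpha> + \<beta>)^2 \<ge> 1" and norm: "\<alpha>^2 + \<beta>^2 + 2 * \<alpha> * \<beta> * c = 1"
  shows "(s * sqrt ((\<alpha> + \<beta>)^2 - 1))^2 =
    2 / (c + 1) * (s * sqrt ((\<alpha> + \<beta> * c)^2 - 1)) * (s * sqrt ((\<alpha> * c + \<beta>)^2 - 1))"
proof -
  have e1: "(\<alpha> + \<beta>)^2 - 1 = 2 * \<alpha> * \<beta> * (1 - c)"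
    using norm by (simp add: algebra_simps power2_eq_square)
  have e2: "(\<alpha> + \<beta> * c)^2 - 1 = \<beta>^2 * (c^2 - 1)"
    and e3: "(\<alpha> * c + \<beta>)^2 - 1 = \<alpha>^2 * (c^2 - 1)"
    using norm by (simp_all add: algebra_simps power2_eq_square)
  have "sqrt ((\<alpha> + \<beta> * c)^2 - 1) * sqrt ((\<alpha> * c + \<beta>)^2 - 1)
      = sqrt (\<beta>^2 * (c^2 - 1) * (\<alpha>^2 * (c^2 - 1)))"
    unfolding e2 e3 real_sqrt_mult ..
  also have "\<dots> = sqrt ((\<alpha> * \<beta> * (c^2 - 1))^2)"
    by (simp add: algebra_simps power2_eq_square)
  also have "\<dots> = \<bar>\<alpha> * \<beta>\<bar> * (c^2 - 1)"
    using c by (simp only: real_sqrt_abs abs_mult) (simp add: one_le_power)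
  also have "\<dots> = \<bar>\<alpha> * \<beta>\<bar> * (c - 1) * (c + 1)"
    by (simp add: algebra_simps power2_eq_square)
  \<comment> \<open>\<open>\<alpha> \<beta> \<le> 0\<close> unless \<open>c = 1\<close>, by \<open>e1\<close> and \<open>(\<alpha> + \<beta>)\<^sup>2 \<ge> 1\<close>\<close>
  also have "\<bar>\<alpha> * \<beta>\<bar> * (c - 1) = \<alpha> * \<beta> * (1 - c)"
  proof (cases "c = 1")
    case False
    then have "1 - c < 0"
      using c by simp
    moreover have "2 * \<alpha> * \<beta> * (1 - c) \<ge> 0"
      using e1 sum by simp
    ultimately have "\<alpha> * \<beta> \<le> 0"
      using mult_pos_neg[of "2 * \<alpha> * \<beta>" "1 - c"] by linarith
    then show ?thesis
      by (simp add: abs_of_nonpos algebra_simps)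
  qed simp
  finally have prod: "sqrt ((\<alpha> + \<beta> * c)^2 - 1) * sqrt ((\<alpha> * c + \<beta>)^2 - 1)
      = \<alpha> * \<beta> * (1 - c) * (c + 1)" .
  have "2 / (c + 1) * (s * sqrt ((\<alpha> + \<beta> * c)^2 - 1)) * (s * sqrt ((\<alpha> * c + \<beta>)^2 - 1))
      = 2 / (c + 1) * s^2 * (\<alpha> * \<beta> * (1 - c) * (c + 1))"
    unfolding prod[symmetric] by (simp add: power2_eq_square)
  also have "\<dots> = s^2 * ((\<alpha> + \<beta>)^2 - 1)"
    unfolding e1 using c by (simp add: field_simps)
  also have "\<dots> = (s * sqrt ((\<alpha> + \<beta>)^2 - 1))^2"
    using sum by (simp add: power_mult_distrib)
  finally show ?thesis ..
qed

lemma gyroline_closed_affine: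
  assumes "is_gyroline s T" "A \<in> T" "P \<in> T" "norm (A + \<tau> *\<^sub>R (P - A)) < s"
  shows "A + \<tau> *\<^sub>R (P - A) \<in> T"
proof -
  obtain a d where T: "T = {a + t *\<^sub>R d | t. True} \<inter> ball_s s"
    using assms(1) unfolding is_gyroline_def by blast
  obtain t1 t2 where "A = a + t1 *\<^sub>R d" "P = a + t2 *\<^sub>R d"
    using assms(2,3) T by blast
  then have "A + \<tau> *\<^sub>R (P - A) = a + (t1 + \<tau> * (t2 - t1)) *\<^sub>R d"
    by (simp add: algebra_simps)
  then show ?thesis
    using assms(4) T by (auto simp: ball_s_def)
qed

lemma mem_gyroplane_norm_less: "is_gyroplane s Pl \<Longrightarrow> X \<in> Pl \<Longrightarrow> norm X < s"
  unfolding is_gyroplane_def gyroplane_def ball_s_def by auto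

lemma mem_gyrocircle_iff_lift_product:
  assumes s: "s > 0" and Pl: "is_gyroplane s Pl" and "Oc \<in> Pl" and A: "A \<in> gyrocircle s Pl Oc r"
  shows "X \<in> gyrocircle s Pl Oc r \<longleftrightarrow> X \<in> Pl \<and> lift_product s Oc X = lift_product s Oc A"
proof (cases "X \<in> Pl")
  case True
  have "A \<in> Pl" "gyrodist s Oc A = r"
    using A by (simp_all add: gyrocircle_def)
  then show ?thesis
    using gyrodist_eq_iff_lift_product_eq[OF s, of Oc X Oc A] mem_gyroplane_norm_less[OF Pl]
      \<open>Oc \<in> Pl\<close> True
    by (simp add: gyrocircle_def)
qed (simp add: gyrocircle_def)

lemma gyrotangent_lift_product:
  assumes s: "s > 0" and Pl: "is_gyroplane s Pl" and "Oc \<in> Pl"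
    and T: "is_gyroline s T" "T \<subseteq> Pl" and tangent: "T \<inter> gyrocircle s Pl Oc r = {A}"
    and "P \<in> T" "P \<noteq> A"
  shows "lift_product s Oc P = lift_product s Oc A * lift_product s A P"
proof -
  have "A \<in> T" "A \<in> gyrocircle s Pl Oc r"
    using tangent by auto
  note circle_iff = mem_gyrocircle_iff_lift_product[OF s Pl \<open>Oc \<in> Pl\<close> \<open>A \<in> gyrocircle s Pl Oc r\<close>]
  show ?thesis
  proof (rule lift_product_tangent[OF s])
    show "norm Oc < s" "norm A < s" "norm P < s"
      using mem_gyroplane_norm_less[OF Pl] \<open>Oc \<in> Pl\<close> \<open>A \<in> T\<close> \<open>P \<in> T\<close> T(2) by auto
    show "A \<noteq> P"
      using \<open>P \<noteq> A\<close> by simp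
    fix \<tau>
    assume "norm (A + \<tau> *\<^sub>R (P - A)) < s"
      and on_circle: "lift_product s Oc (A + \<tau> *\<^sub>R (P - A)) = lift_product s Oc A"
    then have "A + \<tau> *\<^sub>R (P - A) \<in> T"
      using gyroline_closed_affine[OF T(1) \<open>A \<in> T\<close> \<open>P \<in> T\<close>] by blast
    moreover from this have "A + \<tau> *\<^sub>R (P - A) \<in> gyrocircle s Pl Oc r"
      using T(2) on_circle circle_iff by blast
    ultimately have "A + \<tau> *\<^sub>R (P - A) = A"
      using tangent by blast
    then show "\<tau> = 0"
      using \<open>P \<noteq> A\<close> by simp
  qed
qed

theorem mainTheorem4:
  fixes s :: real and Pl :: "(real^'n) set" and Oc A1 A2 A3 P :: "real^'n"
    and r :: real and T :: "(real^'n) set"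
  assumes "CARD('n) \<ge> 2" and "s > 0"
    and "is_gyroplane s Pl" and "Oc \<in> Pl" and "r > 0"
    and "A1 \<in> gyrocircle s Pl Oc r" and "A2 \<in> gyrocircle s Pl Oc r" and "A3 \<in> gyrocircle s Pl Oc r"
    and "A1 \<noteq> A2" and "A1 \<noteq> A3" and "A2 \<noteq> A3"
    and "is_gyroline s T" and "T \<subseteq> Pl" and "T \<inter> gyrocircle s Pl Oc r = {A1}"
    and "P \<in> T" and "P \<in> gyroline_through s A2 A3" and "P \<notin> gyrocircle s Pl Oc r"
  shows "(gamr s (gyrodist s A1 P))^2 * (gyrodist s A1 P)^2 =
         2 / (gamr s (gyrodist s A2 A3) + 1) *
         (gamr s (gyrodist s A2 P) * gyrodist s A2 P) *
         (gamr s (gyrodist s A3 P) * gyrodist s A3 P)"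
proof -
  note s = \<open>s > 0\<close> and circle_iff = mem_gyrocircle_iff_lift_product[OF s assms(3,4,6)]
  have A1: "norm A1 < s" and A2: "norm A2 < s" and A3: "norm A3 < s" and Oc: "norm Oc < s"
    using assms(4,6-8) mem_gyroplane_norm_less[OF assms(3)] unfolding gyrocircle_def by auto
  obtain t where Pt: "P = A2 + t *\<^sub>R (A3 - A2)" and P: "norm P < s"
    using assms(16) unfolding gyroline_through_def ball_s_def by auto
  have tangent: "lift_product s Oc P = lift_product s Oc A1 * lift_product s A1 P"
    using gyrotangent_lift_product[OF s assms(3,4,12,13,14,15)] assms(6,17) by blast
  define \<alpha> where "\<alpha> = gam s P * (1 - t) / gam s A2"
  define \<beta> where "\<beta> = gam s P * t / gam s A3"
  note comb = lift_products_of_combination[OF s A2 A3 P lorentz_lift_on_line[OF s A2 A3 Pt],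
      folded \<alpha>_def \<beta>_def]
  have "lift_product s Oc A2 = lift_product s Oc A1" "lift_product s Oc A3 = lift_product s Oc A1"
    using circle_iff assms(7,8) by blast+
  then have "lift_product s Oc A1 * lift_product s A1 P = lift_product s Oc A1 * (\<alpha> + \<beta>)"
    using tangent comb(1)[of Oc] by (simp add: algebra_simps)
  then have C1: "lift_product s A1 P = \<alpha> + \<beta>"
    using lift_product_pos[OF s Oc A1] by simp
  then have "(\<alpha> + \<beta>)^2 \<ge> 1"
    using lift_product_ge_one[OF s A1 P] by (simp add: one_le_power)
  then show ?thesis
    unfolding power_mult_distrib[symmetric] gamr_gyrodist_mult_gyrodist[OF s A1 P]
      gamr_gyrodist_mult_gyrodist[OF s A2 P] gamr_gyrodist_mult_gyrodist[OF s A3 P]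
      gamr_gyrodist[OF s A2 A3] C1 comb(2,3)
    by (rule tangent_secant_identity[OF lift_product_ge_one[OF s A2 A3] _ comb(4)])
qed

end
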